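(* Let $X$ be the class of continuous functions $f:[0,1]\to\mathbb{R}$ with $f(0),f(1)\in\mathbb{Z}$. Then each of the two families of operators $\widetilde{B}_n$, $n\in\mathbb{N}_+$, and $\widehat{B}_n$, $n\in\mathbb{N}_+$, uniformly asymptotically preserves monotonicity on $X$.
   Context: For $n\in\mathbb{N}_+$ and $f:[0,1]\to\mathbb{R}$, define $\widetilde{B}_n(f)(x):=\sum_{k=0}^n \left[f\left(\frac{k}{n}\right)\binom{n}{k}\right]x^k(1-x)^{n-k}$, where $[\alpha]$ is the largest integer $\le\alpha$, and $\widehat{B}_n(f)(x):=\sum_{k=0}^n \left\langle f\left(\frac{k}{n}\right)\binom{n}{k}\right\rangle x^k(1-x)^{n-k}$, where $\langle\alpha\rangle$ is the integer nearest to $\alpha$ (when $\alpha$ is a half-integer, $\langle\alpha\rangle$ may be either of the two neighbouring integers, chosen arbitrarily; the result holds for any such choice). Definition: a family of operators $L_n:X\to X$, $n\in\mathbb{N}_+$, on a class $X$ of functions defined on $I\subseteq\mathbb{R}$ uniformly asymptotically preserves monotonicity on $X$ if there exist $n_0\in\mathbb{N}_+$ and functions $\varepsilon_n,\eta_n:I\to\mathbb{R}$, $n\ge n_0$, such that: (i) $\varepsilon_n\to 0$ and $\eta_n\to 0$ uniformly on $I$ as $n\to\infty$; (ii) whenever $f\in X$ is monotone increasing on $I$, $L_n(f)+\varepsilon_n$ is monotone increasing on $I$ for all $n\ge n_0$; (iii) whenever $f\in X$ is monotone decreasing on $I$, $L_n(f)+\eta_n$ is monotone decreasing on $I$ for all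 $n\ge n_0$. Monotone increasing/decreasing are meant in the non-strict sense. *)

theory Defs
  imports "HOL-Analysis.Analysis"
begin

definition classX :: "(real \<Rightarrow> real) set" where
  "classX = {f. continuous_on {0..1} f \<and> f 0 \<in> \<int> \<and> f 1 \<in> \<int>}"

definition roundB :: "(real \<Rightarrow> int) \<Rightarrow> nat \<Rightarrow> (real \<Rightarrow> real) \<Rightarrow> real \<Rightarrow> real" where
  "roundB r n f x = (\<Sum>k=0..n. real_of_int (r (f (real k / real n) * real (n choose k))) * x ^ k * (1 - x) ^ (n - k))"

definition Btilde :: "nat \<Rightarrow> (real \<Rightarrow> real) \<Rightarrow> real \<Rightarrow> real" where
  "Btilde n f = roundB floor n f"

text \<open>Admissible nearest-integer functions (ties broken arbitrarily).\<close>
definition nearest_int_fun :: "(real \<Rightarrow> int) \<Rightarrow> bool" where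
  "nearest_int_fun r \<longleftrightarrow> (\<forall>a. \<bar>real_of_int (r a) - a\<bar> \<le> 1/2)"

definition unif_asym_pres_mono ::
  "(nat \<Rightarrow> (real \<Rightarrow> real) \<Rightarrow> real \<Rightarrow> real) \<Rightarrow> (real \<Rightarrow> real) set \<Rightarrow> real set \<Rightarrow> bool" where
  "unif_asym_pres_mono L X I \<longleftrightarrow>
     (\<exists>(n0::nat) (eps :: nat \<Rightarrow> real \<Rightarrow> real) (eta :: nat \<Rightarrow> real \<Rightarrow> real).
        n0 \<ge> 1 \<and>
        (\<forall>e>0. \<forall>\<^sub>F n in sequentially. \<forall>x\<in>I. \<bar>eps n x\<bar> < e) \<and>
        (\<forall>e>0. \<forall>\<^sub>F n in sequentially. \<forall>x\<in>I. \<bar>eta n x\<bar> < e) \<and>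
        (\<forall>f\<in>X. mono_on I f \<longrightarrow> (\<forall>n\<ge>n0. mono_on I (\<lambda>x. L n f x + eps n x))) \<and>
        (\<forall>f\<in>X. antimono_on I f \<longrightarrow> (\<forall>n\<ge>n0. antimono_on I (\<lambda>x. L n f x + eta n x))))"

end

theory Submission
  imports Defs
begin

text \<open>
  Write \<open>b\<^sub>k\<close> for the rounded coefficient divided by \<open>n choose k\<close>, so that the operator
  is the Bernstein polynomial with coefficients \<open>b\<^sub>k\<close>. Since \<open>f 0\<close> and \<open>f 1\<close> are integers,
  \<open>b\<^sub>0 = f 0\<close> and \<open>b\<^sub>n = f 1\<close>, while \<open>\<bar>b\<^sub>k - f (k/n)\<bar> < 1 / (n choose k) =: \<delta>\<^sub>k\<close>
  for \<open>0 < k < n\<close>. If \<open>f\<close> is increasing, adding \<open>c\<^sub>k = \<Sum>\<^sub>j\<^sub><\<^sub>k (\<delta>\<^sub>j + \<delta>\<^sub>j\<^sub>+\<^sub>1)\<close> makes the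
  coefficient sequence increasing, and a Bernstein polynomial with increasing coefficients
  is increasing on \<open>[0,1]\<close>, because its derivative is \<open>n\<close> times the Bernstein polynomial of
  the forward differences. The correction \<open>\<epsilon>\<^sub>n\<close> is the Bernstein polynomial of \<open>c\<close>, bounded by
  \<open>c\<^sub>n \<le> 2 \<Sum>\<^sub>k \<delta>\<^sub>k = O(1/n)\<close>, since \<open>n choose k \<ge> n choose 2\<close> away from the four extreme
  indices. Decreasing \<open>f\<close> are handled symmetrically with \<open>\<eta>\<^sub>n = -\<epsilon>\<^sub>n\<close>.
\<close>

lemma has_real_derivative_Bernstein_0:
  "(Bernstein (Suc m) 0 has_real_derivative - real (Suc m) * Bernstein m 0 x) (at x)"
  unfolding Bernstein_def by (rule derivative_eq_intros refl)+ (simp add: algebra_simps)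

lemma has_real_derivative_Bernstein_Suc:
  "(Bernstein (Suc m) (Suc k) has_real_derivative
     real (Suc m) * (Bernstein m k x - Bernstein m (Suc k) x)) (at x)"
proof (rule DERIV_cong)
  define C where "C = real (Suc m choose Suc k)"
  show "(Bernstein (Suc m) (Suc k) has_real_derivative
      C * real (Suc k) * (x^k * (1-x)^(m-k)) - C * real (m-k) * (x^Suc k * (1-x)^(m - Suc k))) (at x)"
    unfolding Bernstein_def C_def by (rule derivative_eq_intros refl)+ (simp add: algebra_simps)
  have "C * real (Suc k) = real (Suc m) * real (m choose k)"
    unfolding C_def by (metis Suc_times_binomial_eq of_nat_mult)
  moreover have "C * real (m - k) = real (Suc m) * real (m choose Suc k)"
    unfolding C_def by (metis binomial_absorb_comp diff_Suc_1 diff_Suc_Suc mult.commute of_nat_mult)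
  ultimately show "C * real (Suc k) * (x^k * (1-x)^(m-k)) - C * real (m-k) * (x^Suc k * (1-x)^(m - Suc k))
      = real (Suc m) * (Bernstein m k x - Bernstein m (Suc k) x)"
    by (simp add: Bernstein_def algebra_simps)
qed

lemma has_real_derivative_Bernstein_sum:
  "((\<lambda>x. \<Sum>k\<le>Suc m. c k * Bernstein (Suc m) k x) has_real_derivative
     real (Suc m) * (\<Sum>k\<le>m. (c (Suc k) - c k) * Bernstein m k x)) (at x)"
proof -
  have "((\<lambda>x. c 0 * Bernstein (Suc m) 0 x + (\<Sum>k\<le>m. c (Suc k) * Bernstein (Suc m) (Suc k) x))
      has_real_derivative c 0 * (- real (Suc m) * Bernstein m 0 x)
        + (\<Sum>k\<le>m. c (Suc k) * (real (Suc m) * (Bernstein m k x - Bernstein m (Suc k) x)))) (at x)"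
    by (intro DERIV_add DERIV_cmult DERIV_sum has_real_derivative_Bernstein_0
        has_real_derivative_Bernstein_Suc)
  moreover have "c 0 * (- real (Suc m) * Bernstein m 0 x)
        + (\<Sum>k\<le>m. c (Suc k) * (real (Suc m) * (Bernstein m k x - Bernstein m (Suc k) x)))
      = real (Suc m) * ((\<Sum>k\<le>m. c (Suc k) * Bernstein m k x)
        - (c 0 * Bernstein m 0 x + (\<Sum>k\<le>m. c (Suc k) * Bernstein m (Suc k) x)))"
    by (simp add: algebra_simps sum_distrib_left sum_subtractf)
  moreover have "c 0 * Bernstein m 0 x + (\<Sum>k\<le>m. c (Suc k) * Bernstein m (Suc k) x)
      = (\<Sum>k\<le>m. c k * Bernstein m k x)"
  proof -
    have "Bernstein m (Suc m) x = 0" by (simp add: Bernstein_def binomial_eq_0)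
    then show ?thesis
      using sum.atMost_Suc_shift[of "\<lambda>k. c k * Bernstein m k x" m] by simp
  qed
  ultimately show ?thesis
    unfolding sum.atMost_Suc_shift[of _ m] by (simp add: sum_subtractf left_diff_distrib)
qed

lemma mono_on_Bernstein_sum:
  assumes "\<And>k. k < n \<Longrightarrow> c k \<le> c (Suc k)"
  shows "mono_on {0..1} (\<lambda>x. \<Sum>k\<le>n. c k * Bernstein n k x)"
proof (cases n)
  case 0
  then show ?thesis by (simp add: monotone_on_def Bernstein_def)
next
  case (Suc m)
  show ?thesis
  proof (rule mono_onI)
    fix a b :: real
    assume "a \<in> {0..1}" "b \<in> {0..1}" "a \<le> b"
    then show "(\<Sum>k\<le>n. c k * Bernstein n k a) \<le> (\<Sum>k\<le>n. c k * Bernstein n k b)"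
      unfolding Suc using assms Suc
      by (intro deriv_nonneg_imp_mono[OF has_real_derivative_Bernstein_sum])
        (auto intro!: mult_nonneg_nonneg sum_nonneg Bernstein_nonneg)
  qed
qed

lemma antimono_on_Bernstein_sum:
  assumes "\<And>k. k < n \<Longrightarrow> c (Suc k) \<le> c k"
  shows "antimono_on {0..1} (\<lambda>x. \<Sum>k\<le>n. c k * Bernstein n k x)"
  using mono_on_Bernstein_sum[of n "\<lambda>k. - c k"] assms
  by (simp add: monotone_on_def sum_negf)

lemma abs_Bernstein_sum_le:
  assumes "\<And>k. k \<le> n \<Longrightarrow> 0 \<le> c k \<and> c k \<le> M" and "x \<in> {0..1}"
  shows "\<bar>\<Sum>k\<le>n. c k * Bernstein n k x\<bar> \<le> M"
proof -
  have "0 \<le> (\<Sum>k\<le>n. c k * Bernstein n k x)"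
    using assms by (auto intro!: sum_nonneg mult_nonneg_nonneg Bernstein_nonneg)
  moreover have "(\<Sum>k\<le>n. c k * Bernstein n k x) \<le> (\<Sum>k\<le>n. M * Bernstein n k x)"
    using assms by (auto intro!: sum_mono mult_right_mono Bernstein_nonneg)
  ultimately show ?thesis by (simp add: sum_distrib_left[symmetric])
qed

definition correction :: "(nat \<Rightarrow> real) \<Rightarrow> nat \<Rightarrow> real" where
  "correction \<delta> k = (\<Sum>j<k. \<delta> j + \<delta> (Suc j))"

lemma correction_Suc: "correction \<delta> (Suc k) = correction \<delta> k + \<delta> k + \<delta> (Suc k)"
  by (simp add: correction_def)

lemma correction_nonneg: "(\<And>j. 0 \<le> \<delta> j) \<Longrightarrow> 0 \<le> correction \<delta> k"
  unfolding correction_def by (intro sum_nonneg add_nonneg_nonneg)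

lemma correction_le:
  assumes nonneg: "\<And>j. 0 \<le> \<delta> j" and "k \<le> n"
  shows "correction \<delta> k \<le> 2 * (\<Sum>j\<le>n. \<delta> j)"
proof -
  have "correction \<delta> k \<le> correction \<delta> n"
    unfolding correction_def using assms by (intro sum_mono2) (auto intro: add_nonneg_nonneg)
  also have "\<dots> = (\<Sum>j<n. \<delta> j) + (\<Sum>j<n. \<delta> (Suc j))"
    by (simp add: correction_def sum.distrib)
  also have "(\<Sum>j<n. \<delta> j) \<le> (\<Sum>j\<le>n. \<delta> j)"
    using nonneg by (intro sum_mono2) auto
  also have "(\<Sum>j<n. \<delta> (Suc j)) \<le> (\<Sum>j\<le>n. \<delta> j)"
    using sum.lessThan_Suc_shift[of \<delta> n] nonneg[of 0] by (simp add: lessThan_Suc_atMost)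
  finally show ?thesis by simp
qed

lemma add_correction_le_Suc:
  assumes "\<bar>b k - a k\<bar> \<le> \<delta> k" "\<bar>b (Suc k) - a (Suc k)\<bar> \<le> \<delta> (Suc k)" "a k \<le> a (Suc k)"
  shows "b k + correction \<delta> k \<le> b (Suc k) + correction \<delta> (Suc k)"
  using assms by (simp add: correction_Suc abs_le_iff)

lemma diff_correction_Suc_le:
  assumes "\<bar>b k - a k\<bar> \<le> \<delta> k" "\<bar>b (Suc k) - a (Suc k)\<bar> \<le> \<delta> (Suc k)" "a (Suc k) \<le> a k"
  shows "b (Suc k) - correction \<delta> (Suc k) \<le> b k - correction \<delta> k"
  using assms by (simp add: correction_Suc abs_le_iff)

definition rounding_error :: "nat \<Rightarrow> nat \<Rightarrow> real" where
  "rounding_error n k = (if 0 < k \<and> k < n then 1 / real (n choose k) else 0)"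

lemma rounding_error_nonneg: "0 \<le> rounding_error n k"
  by (simp add: rounding_error_def)

lemma choose_two_le_binomial:
  assumes "2 \<le> k" "k + 2 \<le> n"
  shows "n choose 2 \<le> n choose k"
proof (cases "2 * k \<le> n")
  case True
  then show ?thesis using binomial_mono[of 2 k n] assms by simp
next
  case False
  then have "n choose 2 \<le> n choose (n - k)" using binomial_mono[of 2 "n - k" n] assms by simp
  also have "\<dots> = n choose k" using binomial_symmetric[of k n] assms by simp
  finally show ?thesis .
qed

lemma real_choose_two: "real (n choose 2) = real n * (real n - 1) / 2"
proof (cases n)
  case (Suc m)
  have "even (n * (n - 1))" by (cases "even n") auto
  then have "real (n * (n - 1) div 2) = real (n * (n - 1)) / 2"
    by (simp add: real_of_nat_div)
  then show ?thesis using Suc by (simp add: choose_two of_nat_diff distrib_right)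
qed simp

lemma rounding_error_le:
  assumes n: "4 \<le> n"
  shows "rounding_error n k \<le> (if k = 1 \<or> k = n - 1 then 1 / real n else 0) + 2 / (real n * (real n - 1))"
proof -
  have pos: "0 < real n * (real n - 1)" using n by simp
  consider "k = 0 \<or> n \<le> k" | "k = 1 \<or> k = n - 1" | "2 \<le> k \<and> k + 2 \<le> n" using n by linarith
  then show ?thesis
  proof cases
    case 1
    then show ?thesis using pos by (auto simp: rounding_error_def)
  next
    case 2
    moreover have "n choose (n - 1) = n" using n binomial_symmetric[of 1 n] by simp
    ultimately show ?thesis using pos n by (auto simp: rounding_error_def)
  next
    case 3
    have "1 / real (n choose k) \<le> 1 / real (n choose 2)"
      using choose_two_le_binomial[of k n] 3 n by (intro divide_left_mono) auto
    moreover have "k \<noteq> 1" "k \<noteq> n - 1" using 3 by auto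
    ultimately show ?thesis using 3 by (simp add: rounding_error_def real_choose_two)
  qed
qed

lemma sum_rounding_error_le:
  assumes n: "4 \<le> n"
  shows "(\<Sum>k\<le>n. rounding_error n k) \<le> 6 / real n"
proof -
  have "(\<Sum>k\<le>n. rounding_error n k)
      \<le> (\<Sum>k\<le>n. (if k = 1 \<or> k = n - 1 then 1 / real n else 0) + 2 / (real n * (real n - 1)))"
    by (intro sum_mono rounding_error_le n)
  also have "\<dots> = 2 / real n + (real n + 1) * (2 / (real n * (real n - 1)))"
  proof -
    have "{..n} \<inter> {k. k = 1 \<or> k = n - 1} = {1, n - 1}" using n by auto
    then show ?thesis using n by (simp add: sum.distrib sum.If_cases)
  qed
  also have "\<dots> \<le> 6 / real n"
  proof -
    have "(real n + 1) * 2 \<le> 4 * (real n - 1)" using n by simp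
    then have "(real n + 1) * (2 / (real n * (real n - 1))) \<le> 4 / real n"
      using n by (simp add: field_simps)
    then show ?thesis by simp
  qed
  finally show ?thesis .
qed

lemma eventually_uniformly_small_if_bounded_by_inverse:
  fixes g :: "nat \<Rightarrow> 'a \<Rightarrow> real"
  assumes "\<And>n x. N \<le> n \<Longrightarrow> x \<in> I \<Longrightarrow> \<bar>g n x\<bar> \<le> C / real n"
  shows "\<forall>e>0. \<forall>\<^sub>F n in sequentially. \<forall>x\<in>I. \<bar>g n x\<bar> < e"
proof (intro allI impI)
  fix e :: real
  assume "0 < e"
  then have "\<forall>\<^sub>F n in sequentially. C / real n < e"
    using order_tendstoD(2)[OF lim_const_over_n] by blast
  then show "\<forall>\<^sub>F n in sequentially. \<forall>x\<in>I. \<bar>g n x\<bar> < e"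
    using eventually_ge_at_top[of N] by eventually_elim (use assms in fastforce)
qed

lemma of_int_round_Ints:
  fixes r :: "real \<Rightarrow> int"
  assumes "\<bar>of_int (r a) - a\<bar> < 1" and "a \<in> \<int>"
  shows "of_int (r a) = a"
proof -
  obtain m where m: "a = of_int m" using \<open>a \<in> \<int>\<close> by (auto elim: Ints_cases)
  then have "\<bar>r a - m\<bar> < 1" using assms(1) by linarith
  then show ?thesis using m by simp
qed

definition rounded_coefficient :: "(real \<Rightarrow> int) \<Rightarrow> (real \<Rightarrow> real) \<Rightarrow> nat \<Rightarrow> nat \<Rightarrow> real" where
  "rounded_coefficient r f n k =
     of_int (r (f (real k / real n) * real (n choose k))) / real (n choose k)"

lemma roundB_eq_Bernstein_sum:
  "roundB r n f x = (\<Sum>k\<le>n. rounded_coefficient r f n k * Bernstein n k x)"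
  unfolding roundB_def Bernstein_def rounded_coefficient_def atLeast0AtMost
  by (intro sum.cong refl) (simp add: field_simps)

lemma abs_rounded_coefficient_diff_le:
  fixes r :: "real \<Rightarrow> int"
  assumes r: "\<And>a. \<bar>of_int (r a) - a\<bar> < 1" and f: "f \<in> classX" and "1 \<le> n" "k \<le> n"
  shows "\<bar>rounded_coefficient r f n k - f (real k / real n)\<bar> \<le> rounding_error n k"
proof -
  consider "k = 0" | "k = n" | "0 < k \<and> k < n" using \<open>k \<le> n\<close> by linarith
  then show ?thesis
  proof cases
    case 1
    then show ?thesis using f of_int_round_Ints[OF r, where a = "f 0"]
      by (simp add: classX_def rounded_coefficient_def rounding_error_def)
  next
    case 2
    then show ?thesis using f \<open>1 \<le> n\<close> of_int_round_Ints[OF r, where a = "f 1"]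
      by (simp add: classX_def rounded_coefficient_def rounding_error_def)
  next
    case 3
    define a where "a = f (real k / real n) * real (n choose k)"
    have C: "0 < real (n choose k)" using \<open>k \<le> n\<close> by simp
    have "rounded_coefficient r f n k - f (real k / real n) = (of_int (r a) - a) / real (n choose k)"
      using C by (simp add: rounded_coefficient_def a_def field_simps)
    then have "\<bar>rounded_coefficient r f n k - f (real k / real n)\<bar>
        = \<bar>of_int (r a) - a\<bar> / real (n choose k)"
      using C by (simp add: abs_divide)
    also have "\<dots> \<le> 1 / real (n choose k)"
      using r[of a] C by (intro divide_right_mono) auto
    finally show ?thesis using 3 by (simp add: rounding_error_def)
  qed
qed

definition rounding_corrector :: "nat \<Rightarrow> real \<Rightarrow> real" where
  "rounding_corrector n x = (\<Sum>k\<le>n. correction (rounding_error n) k * Bernstein n k x)"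

lemma abs_rounding_corrector_le:
  assumes "4 \<le> n" "x \<in> {0..1}"
  shows "\<bar>rounding_corrector n x\<bar> \<le> 12 / real n"
  unfolding rounding_corrector_def
proof (rule abs_Bernstein_sum_le[OF _ \<open>x \<in> {0..1}\<close>])
  fix k assume "k \<le> n"
  then have "correction (rounding_error n) k \<le> 2 * (\<Sum>j\<le>n. rounding_error n j)"
    by (intro correction_le rounding_error_nonneg)
  then show "0 \<le> correction (rounding_error n) k \<and> correction (rounding_error n) k \<le> 12 / real n"
    using sum_rounding_error_le[OF \<open>4 \<le> n\<close>] by (simp add: correction_nonneg rounding_error_nonneg)
qed

lemma mono_on_roundB_add_corrector:
  fixes r :: "real \<Rightarrow> int"
  assumes r: "\<And>a. \<bar>of_int (r a) - a\<bar> < 1"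
    and f: "f \<in> classX" "mono_on {0..1} f" and n: "1 \<le> n"
  shows "mono_on {0..1} (\<lambda>x. roundB r n f x + rounding_corrector n x)"
proof -
  have "mono_on {0..1}
      (\<lambda>x. \<Sum>k\<le>n. (rounded_coefficient r f n k + correction (rounding_error n) k) * Bernstein n k x)"
  proof (rule mono_on_Bernstein_sum)
    fix k assume "k < n"
    then have "f (real k / real n) \<le> f (real (Suc k) / real n)"
      using n by (intro mono_onD[OF f(2)]) (auto simp: divide_right_mono)
    then show "rounded_coefficient r f n k + correction (rounding_error n) k
        \<le> rounded_coefficient r f n (Suc k) + correction (rounding_error n) (Suc k)"
      using abs_rounded_coefficient_diff_le[OF r f(1) n, of k]
        abs_rounded_coefficient_diff_le[OF r f(1) n, of "Suc k"] \<open>k < n\<close>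
      by (intro add_correction_le_Suc[where a = "\<lambda>k. f (real k / real n)"]) auto
  qed
  then show ?thesis
    by (simp add: roundB_eq_Bernstein_sum rounding_corrector_def sum.distrib distrib_right)
qed

lemma antimono_on_roundB_diff_corrector:
  fixes r :: "real \<Rightarrow> int"
  assumes r: "\<And>a. \<bar>of_int (r a) - a\<bar> < 1"
    and f: "f \<in> classX" "antimono_on {0..1} f" and n: "1 \<le> n"
  shows "antimono_on {0..1} (\<lambda>x. roundB r n f x + - rounding_corrector n x)"
proof -
  have "antimono_on {0..1}
      (\<lambda>x. \<Sum>k\<le>n. (rounded_coefficient r f n k - correction (rounding_error n) k) * Bernstein n k x)"
  proof (rule antimono_on_Bernstein_sum)
    fix k assume "k < n"
    then have "f (real (Suc k) / real n) \<le> f (real k / real n)"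
      using n by (intro monotone_onD[OF f(2)]) (auto simp: divide_right_mono)
    then show "rounded_coefficient r f n (Suc k) - correction (rounding_error n) (Suc k)
        \<le> rounded_coefficient r f n k - correction (rounding_error n) k"
      using abs_rounded_coefficient_diff_le[OF r f(1) n, of k]
        abs_rounded_coefficient_diff_le[OF r f(1) n, of "Suc k"] \<open>k < n\<close>
      by (intro diff_correction_Suc_le[where a = "\<lambda>k. f (real k / real n)"]) auto
  qed
  then show ?thesis
    by (simp add: roundB_eq_Bernstein_sum rounding_corrector_def sum_subtractf left_diff_distrib)
qed

lemma unif_asym_pres_mono_roundB:
  fixes r :: "real \<Rightarrow> int"
  assumes r: "\<And>a. \<bar>of_int (r a) - a\<bar> < 1"
  shows "unif_asym_pres_mono (\<lambda>n. roundB r n) classX {0..1}"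
proof -
  have small: "\<forall>e>0. \<forall>\<^sub>F n in sequentially. \<forall>x\<in>{0..1}. \<bar>rounding_corrector n x\<bar> < e"
    by (rule eventually_uniformly_small_if_bounded_by_inverse[where N = 4])
      (rule abs_rounding_corrector_le)
  show ?thesis
    unfolding unif_asym_pres_mono_def
    using small mono_on_roundB_add_corrector[OF r] antimono_on_roundB_diff_corrector[OF r]
    by (intro exI[of _ 1] exI[of _ rounding_corrector] exI[of _ "\<lambda>n x. - rounding_corrector n x"]) simp
qed

theorem theorem1p3:
  shows "unif_asym_pres_mono Btilde classX {0..1}
         \<and> (\<forall>r. nearest_int_fun r \<longrightarrow> unif_asym_pres_mono (\<lambda>n. roundB r n) classX {0..1})"
proof (intro conjI allI impI)
  have "unif_asym_pres_mono (roundB floor) classX {0..1}"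
    by (rule unif_asym_pres_mono_roundB) linarith
  then show "unif_asym_pres_mono Btilde classX {0..1}"
    by (simp add: Btilde_def[abs_def])
next
  fix r :: "real \<Rightarrow> int"
  assume "nearest_int_fun r"
  then have "\<bar>of_int (r a) - a\<bar> \<le> 1 / 2" for a
    unfolding nearest_int_fun_def by blast
  then have "\<bar>of_int (r a) - a\<bar> < 1" for a
    by (rule order_le_less_trans) simp
  then show "unif_asym_pres_mono (\<lambda>n. roundB r n) classX {0..1}"
    by (rule unif_asym_pres_mono_roundB)
qed

end
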